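(* Let $n\geq 4$. If $\mathcal{C}\subseteq S_n$ is a code with minimum Kendall's $\tau$-distance $4$ (i.e., $d_K(\sigma,\pi)\geq 4$ for all distinct $\sigma,\pi\in\mathcal{C}$), then $|\mathcal{C}|\leq \frac{n!}{2(n-1)}$.
   Context: $S_n$ denotes the set of all permutations of $[n]=\{1,\dots,n\}$, written $\sigma=[\sigma(1),\dots,\sigma(n)]$. An adjacent transposition applied to $\sigma$ exchanges the entries in positions $i$ and $i+1$ for some $1\leq i\leq n-1$. The Kendall's $\tau$-distance $d_K(\sigma,\pi)$ is the minimum number of adjacent transpositions needed to transform $\sigma$ into $\pi$. *)

theory Defs
  imports Main "HOL-Combinatorics.Multiset_Permutations"
begin

text \<open>Permutations of [n] are written in one-line notation as lists
  [sigma(1),...,sigma(n)]; S_n is permutations_of_set {1..n}.\<close>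

definition adj_swap :: "nat \<Rightarrow> 'a list \<Rightarrow> 'a list" where
  "adj_swap i xs = xs[i := xs ! Suc i, Suc i := xs ! i]"

inductive adj_reach :: "nat \<Rightarrow> 'a list \<Rightarrow> 'a list \<Rightarrow> bool" where
  refl: "adj_reach 0 xs xs"
| step: "Suc i < length xs \<Longrightarrow> adj_reach k (adj_swap i xs) ys \<Longrightarrow> adj_reach (Suc k) xs ys"

definition kendall_dist :: "'a list \<Rightarrow> 'a list \<Rightarrow> nat" where
  "kendall_dist xs ys = (LEAST k. adj_reach k xs ys)"

end

theory Submission
  imports Defs "HOL-Combinatorics.Permutations"
begin

text \<open>Double counting. To each codeword s attach the pairs (t, j) with j < n - 1 such that t or
  its j-th adjacent swap is a neighbour of s. There are 2(n-1)^2 of them, since a neighbour of s is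
  never two swaps away from another neighbour (parity). If two codewords shared such a pair, they
  would be at distance at most 3. Hence |C| 2(n-1)^2 \<le> n! (n-1).\<close>

lemma length_adj_swap [simp]: "length (adj_swap i xs) = length xs"
  by (simp add: adj_swap_def)

lemma nth_adj_swap:
  assumes "Suc i < length xs" "k < length xs"
  shows "adj_swap i xs ! k = xs ! transpose i (Suc i) k"
  using assms by (auto simp: adj_swap_def nth_list_update transpose_def)

lemma transpose_Suc_less:
  assumes "Suc i < n" "k < n" shows "transpose i (Suc i) k < n"
  using assms by (auto simp: transpose_def)

lemma adj_swap_adj_swap [simp]:
  assumes "Suc i < length xs"
  shows "adj_swap i (adj_swap i xs) = xs"
  using assms transpose_Suc_less[OF assms]
  by (intro nth_equalityI) (simp_all add: nth_adj_swap)

lemma adj_swap_inj: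
  assumes "distinct xs" "Suc i < length xs" "Suc i' < length xs"
    and "adj_swap i xs = adj_swap i' xs"
  shows "i = i'"
proof -
  have "xs ! transpose i (Suc i) i = xs ! transpose i' (Suc i') i"
    using assms nth_adj_swap by (metis Suc_lessD)
  then have "Suc i = transpose i' (Suc i') i"
    using assms transpose_Suc_less by (simp add: nth_eq_iff_index_eq)
  then show ?thesis by (auto simp: transpose_def split: if_splits)
qed

text \<open>One swap never equals two swaps: the index permutations differ in sign.\<close>

lemma adj_swap_neq_adj_swap_adj_swap:
  assumes d: "distinct xs" and a: "Suc i < length xs" "Suc i' < length xs" "Suc j < length xs"
  shows "adj_swap i xs \<noteq> adj_swap j (adj_swap i' xs)"
proof
  assume eq: "adj_swap i xs = adj_swap j (adj_swap i' xs)"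
  have "transpose i (Suc i) = transpose i' (Suc i') \<circ> transpose j (Suc j)"
  proof
    fix k
    show "transpose i (Suc i) k = (transpose i' (Suc i') \<circ> transpose j (Suc j)) k"
    proof (cases "k < length xs")
      case True
      have jk: "transpose j (Suc j) k < length xs" using transpose_Suc_less a True by blast
      have "xs ! transpose i (Suc i) k = adj_swap j (adj_swap i' xs) ! k"
        using eq nth_adj_swap a True by metis
      also have "\<dots> = xs ! transpose i' (Suc i') (transpose j (Suc j) k)"
        using a True jk by (simp add: nth_adj_swap)
      finally show ?thesis
        using d a True jk transpose_Suc_less by (simp add: nth_eq_iff_index_eq)
    next
      case False
      then show ?thesis using a by (auto simp: transpose_def)
    qed
  qed
  then have "sign (transpose i (Suc i)) = sign (transpose i' (Suc i') \<circ> transpose j (Suc j))"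
    by simp
  then show False by (simp add: sign_compose permutation_swap_id sign_swap_id)
qed

lemma adj_reach_trans:
  "adj_reach k xs ys \<Longrightarrow> adj_reach l ys zs \<Longrightarrow> adj_reach (k + l) xs zs"
  by (induction rule: adj_reach.induct) (auto intro: adj_reach.step)

lemma adj_reach_one_iff:
  "adj_reach (Suc 0) xs ys \<longleftrightarrow> (\<exists>i. Suc i < length xs \<and> ys = adj_swap i xs)"
  by (auto elim!: adj_reach.cases intro: adj_reach.intros)

lemma adj_reach_sym: "adj_reach k xs ys \<Longrightarrow> adj_reach k ys xs"
proof (induction rule: adj_reach.induct)
  case (refl xs)
  then show ?case by (rule adj_reach.refl)
next
  case (step i xs k ys)
  have "adj_reach 1 (adj_swap i xs) xs"
    using step.hyps(1) by (simp add: adj_reach_one_iff) (metis adj_swap_adj_swap)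
  from adj_reach_trans[OF step.IH this] show ?case by simp
qed

lemma adj_reach_permutations_of_set:
  "adj_reach k xs ys \<Longrightarrow> xs \<in> permutations_of_set A \<Longrightarrow> ys \<in> permutations_of_set A"
  by (induction rule: adj_reach.induct) (auto simp: permutations_of_set_def adj_swap_def)

lemma kendall_dist_le: "adj_reach k xs ys \<Longrightarrow> kendall_dist xs ys \<le> k"
  unfolding kendall_dist_def by (rule Least_le)

definition adj_neighbours :: "'a list \<Rightarrow> 'a list set" where
  "adj_neighbours xs = {ys. adj_reach 1 xs ys}"

lemma adj_neighbours_eq: "adj_neighbours xs = (\<lambda>i. adj_swap i xs) ` {..<length xs - 1}"
  by (auto simp: adj_neighbours_def adj_reach_one_iff Suc_less_eq2 less_diff_conv)

lemma card_adj_neighbours: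
  assumes "distinct xs" shows "card (adj_neighbours xs) = length xs - 1"
  unfolding adj_neighbours_eq
  by (subst card_image) (auto intro!: inj_onI intro: adj_swap_inj[OF assms])

definition swap_cover :: "'a list \<Rightarrow> ('a list \<times> nat) set" where
  "swap_cover xs =
    (\<Union>j<length xs - 1. (adj_neighbours xs \<union> adj_swap j ` adj_neighbours xs) \<times> {j})"

lemma card_swap_cover:
  assumes "distinct xs" shows "card (swap_cover xs) = 2 * (length xs - 1)^2"
proof -
  let ?m = "length xs - 1" and ?N = "adj_neighbours xs"
  have len: "length ys = length xs" if "ys \<in> ?N" for ys
    using that by (auto simp: adj_neighbours_eq)
  have fin: "finite ?N" by (simp add: adj_neighbours_eq)
  have slice: "card (?N \<union> adj_swap j ` ?N) = 2 * ?m" if j: "j < ?m" for j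
  proof -
    have "inj_on (adj_swap j) ?N"
      by (rule inj_on_inverseI[of _ "adj_swap j"]) (use j len in auto)
    moreover have "?N \<inter> adj_swap j ` ?N = {}"
      using adj_swap_neq_adj_swap_adj_swap[OF assms] j
      by (auto simp: adj_neighbours_eq less_diff_conv)
    ultimately show ?thesis
      by (simp add: card_Un_disjoint card_image card_adj_neighbours[OF assms] fin)
  qed
  have "card (swap_cover xs) = (\<Sum>j<?m. card ((?N \<union> adj_swap j ` ?N) \<times> {j}))"
    unfolding swap_cover_def
    by (rule card_UN_disjoint) (auto simp: adj_neighbours_eq)
  also have "\<dots> = (\<Sum>j<?m. 2 * ?m)"
    by (rule sum.cong) (simp_all add: card_cartesian_product slice)
  finally show ?thesis by (simp add: power2_eq_square)
qed

lemma swap_cover_subset: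
  assumes "xs \<in> permutations_of_set A"
  shows "swap_cover xs \<subseteq> permutations_of_set A \<times> {..<length xs - 1}"
proof -
  have "ys \<in> permutations_of_set A" if "ys \<in> adj_neighbours xs" for ys
    using that assms adj_reach_permutations_of_set by (auto simp: adj_neighbours_def)
  moreover have "length ys = length xs" if "ys \<in> adj_neighbours xs" for ys
    using that by (auto simp: adj_neighbours_eq)
  ultimately show ?thesis
    unfolding swap_cover_def by (auto simp: permutations_of_set_def adj_swap_def)
qed

lemma swap_cover_memE:
  assumes "(t, j) \<in> swap_cover xs"
  obtains u where "adj_reach 1 xs u" "u = t \<or> Suc j < length t \<and> u = adj_swap j t"
proof -
  from assms obtain u where u: "u \<in> adj_neighbours xs" "u = t \<or> t = adj_swap j u"
    and j: "j < length xs - 1"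
    by (auto simp: swap_cover_def)
  have "Suc j < length u" using u(1) j by (auto simp: adj_neighbours_eq)
  then have "u = t \<or> Suc j < length t \<and> u = adj_swap j t"
    using u(2) by auto
  with u(1) that show ?thesis by (auto simp: adj_neighbours_def)
qed

lemma kendall_dist_le_3_if_swap_covers_meet:
  assumes "swap_cover xs \<inter> swap_cover ys \<noteq> {}"
  shows "kendall_dist xs ys \<le> 3"
proof -
  obtain t j where "(t, j) \<in> swap_cover xs" "(t, j) \<in> swap_cover ys"
    using assms by auto
  then obtain u v where u: "adj_reach 1 xs u" "u = t \<or> Suc j < length t \<and> u = adj_swap j t"
    and v: "adj_reach 1 ys v" "v = t \<or> Suc j < length t \<and> v = adj_swap j t"
    by (auto elim!: swap_cover_memE)
  have swap_t: "adj_reach 1 t (adj_swap j t)" if "Suc j < length t"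
    using that by (simp add: adj_reach_one_iff) blast
  have "u = v \<or> adj_reach 1 u v"
    using u(2) v(2) swap_t adj_reach_sym by blast
  then obtain k where "k \<le> 1" "adj_reach k u v"
    using adj_reach.refl by blast
  then have "adj_reach (1 + k + 1) xs ys"
    using adj_reach_trans[OF adj_reach_trans[OF u(1)] adj_reach_sym[OF v(1)]] by blast
  with \<open>k \<le> 1\<close> show ?thesis
    using kendall_dist_le by fastforce
qed

theorem kendall_code_card_bound:
  assumes A: "finite A" "card A \<ge> 2"
    and C: "C \<subseteq> permutations_of_set A"
    and dist: "\<forall>\<sigma>\<in>C. \<forall>\<pi>\<in>C. \<sigma> \<noteq> \<pi> \<longrightarrow> kendall_dist \<sigma> \<pi> \<ge> 4"
  shows "card C * (2 * (card A - 1)) \<le> fact (card A)"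
proof -
  let ?S = "permutations_of_set A" and ?m = "card A - 1"
  have len: "length xs = card A" if "xs \<in> C" for xs
    using that C A(1) length_finite_permutations_of_set by blast
  have cover_subset: "swap_cover xs \<subseteq> ?S \<times> {..<?m}" if "xs \<in> C" for xs
    using swap_cover_subset[of xs A] that C len by auto
  have fin_S: "finite (?S \<times> {..<?m})"
    using A(1) by simp
  have disj: "swap_cover xs \<inter> swap_cover ys = {}" if "xs \<in> C" "ys \<in> C" "xs \<noteq> ys" for xs ys
  proof (rule ccontr)
    assume "swap_cover xs \<inter> swap_cover ys \<noteq> {}"
    then have "kendall_dist xs ys \<le> 3" by (rule kendall_dist_le_3_if_swap_covers_meet)
    moreover have "kendall_dist xs ys \<ge> 4" using dist that by blast
    ultimately show False by simp
  qed
  have "card C * (2 * ?m^2) = (\<Sum>xs\<in>C. card (swap_cover xs))"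
  proof -
    have "card (swap_cover xs) = 2 * ?m^2" if "xs \<in> C" for xs
      using card_swap_cover[OF permutations_of_setD(2)[OF subsetD[OF C that]]] len[OF that]
      by simp
    then show ?thesis by simp
  qed
  also have "\<dots> = card (\<Union>xs\<in>C. swap_cover xs)"
    using A(1) C finite_subset[OF cover_subset fin_S] disj
    by (intro card_UN_disjoint[symmetric]) (auto intro: finite_subset)
  also have "\<dots> \<le> card (?S \<times> {..<?m})"
    using cover_subset fin_S by (intro card_mono) auto
  also have "\<dots> = fact (card A) * ?m"
    using A(1) by (simp add: card_cartesian_product card_permutations_of_set)
  finally have "(card C * (2 * ?m)) * ?m \<le> fact (card A) * ?m"
    by (simp add: power2_eq_square mult.assoc)
  then show ?thesis using A(2) by simp
qed

theorem corollary2: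
  fixes n :: nat and C :: "nat list set"
  assumes "n \<ge> 4"
    and "C \<subseteq> permutations_of_set {1..n}"
    and "\<forall>\<sigma>\<in>C. \<forall>\<pi>\<in>C. \<sigma> \<noteq> \<pi> \<longrightarrow> kendall_dist \<sigma> \<pi> \<ge> 4"
  shows "real (card C) \<le> fact n / (2 * (real n - 1))"
proof -
  have "card C * (2 * (n - 1)) \<le> fact n"
    using kendall_code_card_bound[of "{1..n}" C] assms by simp
  then have "real (card C * (2 * (n - 1))) \<le> real (fact n)"
    by (rule of_nat_mono)
  then have "real (card C) * (2 * (real n - 1)) \<le> fact n"
    using assms(1) by (simp add: of_nat_diff)
  then show ?thesis using assms(1) by (simp add: pos_le_divide_eq)
qed

end
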